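(* For each $\varepsilon\in\mathrm{U}(1)$ and each $\alpha\in\Sigma_\varepsilon^+$ there exist orthonormal bases $\{X^\varepsilon_{\alpha,i}\}_{i=1}^{m(\alpha,\varepsilon)}$ of $V(\alpha,\varepsilon)\cap\mathfrak k_1$ and $\{Y^\varepsilon_{\alpha,i}\}_{i=1}^{m(\alpha,\varepsilon)}$ of $V(\alpha,\varepsilon)\cap\mathfrak m_1$ such that: (1) for every $H\in\mathfrak a$ and every $i$, $[H,X^\varepsilon_{\alpha,i}]=\langle\alpha,H\rangle Y^\varepsilon_{\alpha,i}$, $[H,Y^\varepsilon_{\alpha,i}]=-\langle\alpha,H\rangle X^\varepsilon_{\alpha,i}$, $[X^\varepsilon_{\alpha,i},Y^\varepsilon_{\alpha,i}]=\alpha$, and $\mathrm{Ad}(\exp H)X^\varepsilon_{\alpha,i}=\cos\langle\alpha,H\rangle X^\varepsilon_{\alpha,i}+\sin\langle\alpha,H\rangle Y^\varepsilon_{\alpha,i}$, $\mathrm{Ad}(\exp H)Y^\varepsilon_{\alpha,i}=-\sin\langle\alpha,H\rangle X^\varepsilon_{\alpha,i}+\cos\langle\alpha,H\rangle Y^\varepsilon_{\alpha,i}$; (2) if $H_\varepsilon\in\mathfrak a$ satisfies $\langle\alpha,H_\varepsilon\rangle=\varphi_\varepsilon$ and we put $\widetilde X^\varepsilon_{\alpha,i}=\mathrm{Ad}(\exp H_\varepsilon)^{-1}X^\varepsilon_{\alpha,i}$, $\widetilde Y^\varepsilon_{\alpha,i}=\mathrm{Ad}(\exp H_\varepsilon)^{-1}Y^\varepsilon_{\alpha,i}$,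 then $\{\widetilde X^\varepsilon_{\alpha,i}\}_i$ and $\{\widetilde Y^\varepsilon_{\alpha,i}\}_i$ are orthonormal bases of $V(\alpha,\varepsilon)\cap\mathfrak k_2$ and $V(\alpha,\varepsilon)\cap\mathfrak m_2$ respectively, and the same identities as in (1) hold with $X,Y$ replaced by $\widetilde X,\widetilde Y$ for every $H\in\mathfrak a$.
   Context: Let $G$ be a compact connected semisimple Lie group with Lie algebra $\mathfrak g$, and let $\theta_1,\theta_2$ be involutive automorphisms of $G$ with $(\theta_1\theta_2)^l=\mathrm{id}_G$ for some positive integer $l$; the induced involutions of $\mathfrak g$ and their complex-linear extensions to $\mathfrak g^{\mathbb C}$ are also denoted $\theta_i$. For $i=1,2$ let $K_i$ be a subgroup with $(G_{\theta_i})_0\subset K_i\subset G_{\theta_i}$ ($G_{\theta_i}$ the fixed point group of $\theta_i$), $\mathfrak k_i=\{X\in\mathfrak g:\theta_iX=X\}$, $\mathfrak m_i=\{X\in\mathfrak g:\theta_iX=-X\}$. Fix an $\mathrm{Ad}(G)$-invariant inner product $\langle\cdot,\cdot\rangle$ on $\mathfrak g$ (extended complex-bilinearly where needed). Let $\mathfrak a$ be a maximal abelian subspace of $\mathfrak m_1\cap\mathfrak m_2$; vectors of $\mathfrak a$ are identified with linear forms on $\mathfrak a$ via $\langle\cdot,\cdot\rangle$. For $\alpha\in\mathfrak a$ put $\mathfrak g(\alpha)=\{X\in\mathfrak g^{\mathbb C}:[H,X]=\sqrt{-1}\langle\alpha,H\rangle X\ \forall H\in\mathfrak a\}$ and for $\varepsilon\in\mathrm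 U(1)$ put $\mathfrak g(\alpha,\varepsilon)=\{X\in\mathfrak g(\alpha):\theta_1\theta_2X=\varepsilon X\}$. Let $\tilde\Sigma=\{\alpha\in\mathfrak a\setminus\{0\}:\mathfrak g(\alpha)\ne0\}$ (a root system) and $\Sigma_\varepsilon=\{\alpha\in\mathfrak a\setminus\{0\}:\mathfrak g(\alpha,\varepsilon)\neq0\}$; fix a set of positive roots $\tilde\Sigma^+$ of $\tilde\Sigma$ and put $\Sigma_\varepsilon^+=\Sigma_\varepsilon\cap\tilde\Sigma^+$. Let $m(\alpha,\varepsilon)=\dim_{\mathbb C}\mathfrak g(\alpha,\varepsilon)$. For $\varepsilon\in\mathrm U(1)$ define $\varphi_\varepsilon\in(-\pi/2,\pi/2]$ by $\varepsilon=e^{2\sqrt{-1}\varphi_\varepsilon}$. For $\alpha\in\tilde\Sigma\cup\{0\}$ put $V(\alpha,\varepsilon)=(\mathfrak g(\alpha,\varepsilon)\oplus\mathfrak g(-\alpha,\varepsilon^{-1}))\cap\mathfrak g$ (real form, intersection with the compact real form $\mathfrak g\subset\mathfrak g^{\mathbb C}$); it is $\theta_1$- and $\theta_2$-invariant and has real dimension $m(\alpha,\varepsilon)$. *)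

theory Defs
  imports "HOL-Analysis.Analysis"
begin

text \<open>The Lie algebra g of G is a finite-dimensional real
inner product space (type 'g, whose inner product is the fixed Ad(G)-invariant one)
with a bracket br. The complexification g^C is modelled as pairs (u,v) = u + i v.\<close>

definition lie_algebra :: "('g::euclidean_space \<Rightarrow> 'g \<Rightarrow> 'g) \<Rightarrow> bool" where
  "lie_algebra br \<longleftrightarrow> bilinear br \<and> (\<forall>x y. br x y = - br y x) \<and>
     (\<forall>x y z. br x (br y z) + br y (br z x) + br z (br x y) = 0)"

definition lie_ideal :: "('g::euclidean_space \<Rightarrow> 'g \<Rightarrow> 'g) \<Rightarrow> 'g set \<Rightarrow> bool" where
  "lie_ideal br I \<longleftrightarrow> subspace I \<and> (\<forall>x y. y \<in> I \<longrightarrow> br x y \<in> I)"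

definition semisimple :: "('g::euclidean_space \<Rightarrow> 'g \<Rightarrow> 'g) \<Rightarrow> bool" where
  "semisimple br \<longleftrightarrow>
     (\<forall>I. lie_ideal br I \<and> (\<forall>x\<in>I. \<forall>y\<in>I. br x y = 0) \<longrightarrow> I = {0})"

text \<open>Ad-invariance of the inner product (infinitesimal form; G connected).\<close>
definition ad_invariant_inner :: "('g::euclidean_space \<Rightarrow> 'g \<Rightarrow> 'g) \<Rightarrow> bool" where
  "ad_invariant_inner br \<longleftrightarrow> (\<forall>x y z. br x y \<bullet> z = - (y \<bullet> br x z))"

definition lie_involution :: "('g::euclidean_space \<Rightarrow> 'g \<Rightarrow> 'g) \<Rightarrow> ('g \<Rightarrow> 'g) \<Rightarrow> bool" where
  "lie_involution br \<theta> \<longleftrightarrow> linear \<theta> \<and> bij \<theta> \<and>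
     (\<forall>x y. \<theta> (br x y) = br (\<theta> x) (\<theta> y)) \<and> (\<forall>x. \<theta> (\<theta> x) = x)"

definition fix_space :: "('g::euclidean_space \<Rightarrow> 'g) \<Rightarrow> 'g set" where
  "fix_space \<theta> = {x. \<theta> x = x}"

definition neg_space :: "('g::euclidean_space \<Rightarrow> 'g) \<Rightarrow> 'g set" where
  "neg_space \<theta> = {x. \<theta> x = - x}"

definition max_abelian :: "('g::euclidean_space \<Rightarrow> 'g \<Rightarrow> 'g) \<Rightarrow> 'g set \<Rightarrow> 'g set \<Rightarrow> bool" where
  "max_abelian br S A \<longleftrightarrow> subspace A \<and> A \<subseteq> S \<and> (\<forall>x\<in>A. \<forall>y\<in>A. br x y = 0) \<and>
     (\<forall>B. subspace B \<and> A \<subseteq> B \<and> B \<subseteq> S \<and> (\<forall>x\<in>B. \<forall>y\<in>B. br x y = 0) \<longrightarrow> B = A)"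

text \<open>Ad(exp H) = e^{ad H}.\<close>
definition Ad_exp :: "('g::euclidean_space \<Rightarrow> 'g \<Rightarrow> 'g) \<Rightarrow> 'g \<Rightarrow> 'g \<Rightarrow> 'g" where
  "Ad_exp br H X = (\<Sum>n. ((br H) ^^ n) X /\<^sub>R fact n)"

text \<open>g(alpha) inside g^C = g x g: [H,u+iv] = i<alpha,H>(u+iv).\<close>
definition root_space :: "('g::euclidean_space \<Rightarrow> 'g \<Rightarrow> 'g) \<Rightarrow> 'g set \<Rightarrow> 'g \<Rightarrow> ('g \<times> 'g) set" where
  "root_space br A \<alpha> = {(u, v). \<forall>H\<in>A. br H u = - ((\<alpha> \<bullet> H) *\<^sub>R v) \<and> br H v = (\<alpha> \<bullet> H) *\<^sub>R u}"

text \<open>g(alpha, eps): additionally theta1 theta2 (u+iv) = eps (u+iv).\<close>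
definition eps_root_space ::
  "('g::euclidean_space \<Rightarrow> 'g \<Rightarrow> 'g) \<Rightarrow> ('g \<Rightarrow> 'g) \<Rightarrow> ('g \<Rightarrow> 'g) \<Rightarrow> 'g set \<Rightarrow> 'g \<Rightarrow> complex \<Rightarrow> ('g \<times> 'g) set" where
  "eps_root_space br \<theta>1 \<theta>2 A \<alpha> \<epsilon> = {(u, v) \<in> root_space br A \<alpha>.
      \<theta>1 (\<theta>2 u) = Re \<epsilon> *\<^sub>R u - Im \<epsilon> *\<^sub>R v \<and> \<theta>1 (\<theta>2 v) = Im \<epsilon> *\<^sub>R u + Re \<epsilon> *\<^sub>R v}"

definition restricted_roots :: "('g::euclidean_space \<Rightarrow> 'g \<Rightarrow> 'g) \<Rightarrow> 'g set \<Rightarrow> 'g set" where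
  "restricted_roots br A = {\<alpha> \<in> A. \<alpha> \<noteq> 0 \<and> root_space br A \<alpha> \<noteq> {0}}"

definition Sigma_eps ::
  "('g::euclidean_space \<Rightarrow> 'g \<Rightarrow> 'g) \<Rightarrow> ('g \<Rightarrow> 'g) \<Rightarrow> ('g \<Rightarrow> 'g) \<Rightarrow> 'g set \<Rightarrow> complex \<Rightarrow> 'g set" where
  "Sigma_eps br \<theta>1 \<theta>2 A \<epsilon> = {\<alpha> \<in> A. \<alpha> \<noteq> 0 \<and> eps_root_space br \<theta>1 \<theta>2 A \<alpha> \<epsilon> \<noteq> {0}}"

definition positive_system :: "('g::euclidean_space \<Rightarrow> 'g \<Rightarrow> 'g) \<Rightarrow> 'g set \<Rightarrow> 'g set \<Rightarrow> bool" where
  "positive_system br A P \<longleftrightarrow> (\<exists>v\<in>A. (\<forall>\<beta>\<in>restricted_roots br A. \<beta> \<bullet> v \<noteq> 0) \<and>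
      P = {\<beta> \<in> restricted_roots br A. 0 < \<beta> \<bullet> v})"

text \<open>Complex dimension of g(alpha,eps) = half of its real dimension.\<close>
definition mult ::
  "('g::euclidean_space \<Rightarrow> 'g \<Rightarrow> 'g) \<Rightarrow> ('g \<Rightarrow> 'g) \<Rightarrow> ('g \<Rightarrow> 'g) \<Rightarrow> 'g set \<Rightarrow> 'g \<Rightarrow> complex \<Rightarrow> nat" where
  "mult br \<theta>1 \<theta>2 A \<alpha> \<epsilon> = dim (eps_root_space br \<theta>1 \<theta>2 A \<alpha> \<epsilon>) div 2"

text \<open>V(alpha,eps) = (g(alpha,eps) + g(-alpha,eps^-1)) \<inter> g.\<close>
definition V_space ::
  "('g::euclidean_space \<Rightarrow> 'g \<Rightarrow> 'g) \<Rightarrow> ('g \<Rightarrow> 'g) \<Rightarrow> ('g \<Rightarrow> 'g) \<Rightarrow> 'g set \<Rightarrow> 'g \<Rightarrow> complex \<Rightarrow> 'g set" where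
  "V_space br \<theta>1 \<theta>2 A \<alpha> \<epsilon> = {x. \<exists>z1\<in>eps_root_space br \<theta>1 \<theta>2 A \<alpha> \<epsilon>.
      \<exists>z2\<in>eps_root_space br \<theta>1 \<theta>2 A (- \<alpha>) (inverse \<epsilon>). z1 + z2 = (x, 0)}"

definition phi_eps :: "complex \<Rightarrow> real" where
  "phi_eps \<epsilon> = (THE \<phi>. - (pi / 2) < \<phi> \<and> \<phi> \<le> pi / 2 \<and> \<epsilon> = cis (2 * \<phi>))"

definition orthonormal_basis_of :: "'g::euclidean_space set \<Rightarrow> nat \<Rightarrow> (nat \<Rightarrow> 'g) \<Rightarrow> bool" where
  "orthonormal_basis_of W m X \<longleftrightarrow> (\<forall>i<m. X i \<in> W) \<and>
     (\<forall>i<m. \<forall>j<m. X i \<bullet> X j = (if i = j then 1 else 0)) \<and> span (X ` {..<m}) = W"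

definition bracket_identities ::
  "('g::euclidean_space \<Rightarrow> 'g \<Rightarrow> 'g) \<Rightarrow> 'g set \<Rightarrow> 'g \<Rightarrow> nat \<Rightarrow> (nat \<Rightarrow> 'g) \<Rightarrow> (nat \<Rightarrow> 'g) \<Rightarrow> bool" where
  "bracket_identities br A \<alpha> m X Y \<longleftrightarrow> (\<forall>H\<in>A. \<forall>i<m.
      br H (X i) = (\<alpha> \<bullet> H) *\<^sub>R Y i \<and>
      br H (Y i) = - ((\<alpha> \<bullet> H) *\<^sub>R X i) \<and>
      br (X i) (Y i) = \<alpha> \<and>
      Ad_exp br H (X i) = cos (\<alpha> \<bullet> H) *\<^sub>R X i + sin (\<alpha> \<bullet> H) *\<^sub>R Y i \<and>
      Ad_exp br H (Y i) = - (sin (\<alpha> \<bullet> H) *\<^sub>R X i) + cos (\<alpha> \<bullet> H) *\<^sub>R Y i)"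

end

(*
  For H in a, ad H acts on the real form V = V(\<alpha>, \<epsilon>) as <\<alpha>, H> J, where
  J = ad \<alpha> / |\<alpha>|^2 is an isometric complex structure on V (multiplication by i on
  g(\<alpha>, \<epsilon>)) anticommuting with \<theta>1 and \<theta>2. Hence Ad(exp H) = exp(<\<alpha>, H> J) rotates
  every plane spanned by x and J x, and J exchanges the two eigenspaces of \<theta>i in V, which
  therefore both have dimension m(\<alpha>, \<epsilon>). For a unit vector x in V fixed by \<theta>1, the
  bracket [x, J x] is fixed by -\<theta>1 and -\<theta>2 and centralizes a, so by maximality it lies
  in a, where pairing with a identifies it as \<alpha>. Thus any orthonormal basis X of V \<inter> k1
  together with Y = J X works. Finally, on each such plane \<theta>2 is the reflection of \<theta>1
  rotated by the angle phi_eps \<epsilon>, so Ad(exp H\<epsilon>)\<inverse> carries both bases to bases adapted to \<theta>2.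
*)
theory Submission
  imports Defs
begin

section \<open>Exponential of a linear map\<close>

lemma Cauchy_product_sums_inner:
  fixes a b :: "nat \<Rightarrow> 'a::euclidean_space"
  assumes a: "summable (\<lambda>k. norm (a k))" and b: "summable (\<lambda>k. norm (b k))"
  shows "(\<lambda>k. \<Sum>i\<le>k. a i \<bullet> b (k - i)) sums ((\<Sum>k. a k) \<bullet> (\<Sum>k. b k))"
proof -
  have coordinate_summable: "summable (\<lambda>k. norm (f k \<bullet> u))"
    if f: "summable (\<lambda>k. norm (f k))" for f :: "nat \<Rightarrow> 'a" and u
  proof (rule summable_comparison_test)
    show "\<exists>N. \<forall>n\<ge>N. norm (norm (f n \<bullet> u)) \<le> norm (f n) * norm u"
      by (simp add: Cauchy_Schwarz_ineq2)
    show "summable (\<lambda>n. norm (f n) * norm u)" using f by (rule summable_mult2)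
  qed
  have coordinate_suminf: "(\<Sum>k. f k) \<bullet> u = (\<Sum>k. f k \<bullet> u)"
    if f: "summable (\<lambda>k. norm (f k))" for f :: "nat \<Rightarrow> 'a" and u
    using bounded_linear.suminf[OF bounded_linear_inner_left summable_norm_cancel[OF f]] .
  have "(\<lambda>k. \<Sum>i\<le>k. (a i \<bullet> u) * (b (k - i) \<bullet> u)) sums (((\<Sum>k. a k) \<bullet> u) * ((\<Sum>k. b k) \<bullet> u))"
    for u
    unfolding coordinate_suminf[OF a] coordinate_suminf[OF b]
    by (intro Cauchy_product_sums coordinate_summable a b)
  then have "(\<lambda>k. \<Sum>u\<in>Basis. \<Sum>i\<le>k. (a i \<bullet> u) * (b (k - i) \<bullet> u))
      sums (\<Sum>u\<in>Basis. ((\<Sum>k. a k) \<bullet> u) * ((\<Sum>k. b k) \<bullet> u))"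
    by (rule sums_sum)
  moreover have "(\<Sum>u\<in>Basis. \<Sum>i\<le>k. (a i \<bullet> u) * (b (k - i) \<bullet> u)) = (\<Sum>i\<le>k. a i \<bullet> b (k - i))" for k
    by (subst sum.swap) (simp only: euclidean_inner[of "a _" "b _", symmetric])
  moreover have "(\<Sum>u\<in>Basis. ((\<Sum>k. a k) \<bullet> u) * ((\<Sum>k. b k) \<bullet> u)) = (\<Sum>k. a k) \<bullet> (\<Sum>k. b k)"
    by (rule euclidean_inner[symmetric])
  ultimately show ?thesis by simp
qed

definition linear_exp :: "('a::real_normed_vector \<Rightarrow> 'a) \<Rightarrow> 'a \<Rightarrow> 'a" where
  "linear_exp D x = (\<Sum>n. (D ^^ n) x /\<^sub>R fact n)"

lemma Ad_exp_eq_linear_exp: "Ad_exp br H = linear_exp (br H)"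
  by (simp add: fun_eq_iff Ad_exp_def linear_exp_def)

lemma linear_funpow: "linear (D::'a::real_vector \<Rightarrow> 'a) \<Longrightarrow> linear (D ^^ n)"
proof (induction n)
  case 0
  then show ?case by (simp add: linear_ident)
next
  case (Suc n)
  then have "linear (D \<circ> D ^^ n)" by (intro linear_compose) auto
  then show ?case by (simp add: o_def)
qed

lemma summable_norm_linear_exp_terms:
  fixes D :: "'a::euclidean_space \<Rightarrow> 'a"
  assumes "linear D"
  shows "summable (\<lambda>n. norm ((D ^^ n) x /\<^sub>R fact n))"
proof -
  obtain K where K: "K > 0" "\<And>x. norm (D x) \<le> norm x * K"
    using assms linear_conv_bounded_linear bounded_linear.pos_bounded by blast
  have power_bound: "norm ((D ^^ n) x) \<le> norm x * K ^ n" for n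
  proof (induction n)
    case (Suc n)
    have "norm ((D ^^ Suc n) x) \<le> norm ((D ^^ n) x) * K" using K(2) by simp
    also have "\<dots> \<le> norm x * K ^ n * K" using Suc K(1) by (simp add: mult_right_mono)
    finally show ?case by (simp add: mult.commute mult.left_commute)
  qed simp
  show ?thesis
  proof (rule summable_comparison_test)
    show "\<exists>N. \<forall>n\<ge>N. norm (norm ((D ^^ n) x /\<^sub>R fact n)) \<le> norm x * (inverse (fact n) * K ^ n)"
      using power_bound by (auto simp: divide_simps mult.commute mult.left_commute)
    show "summable (\<lambda>n. norm x * (inverse (fact n) * K ^ n))"
      by (intro summable_mult summable_exp)
  qed
qed

lemma linear_exp_sums:
  fixes D :: "'a::euclidean_space \<Rightarrow> 'a"
  assumes "linear D"
  shows "(\<lambda>n. (D ^^ n) x /\<^sub>R fact n) sums linear_exp D x"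
  unfolding linear_exp_def
  using summable_norm_cancel[OF summable_norm_linear_exp_terms[OF assms]] by (rule summable_sums)

lemma linear_linear_exp:
  fixes D :: "'a::euclidean_space \<Rightarrow> 'a"
  assumes D: "linear D"
  shows "linear (linear_exp D)"
proof (rule linearI)
  fix x y :: 'a and r :: real
  have "(\<lambda>n. (D ^^ n) x /\<^sub>R fact n + (D ^^ n) y /\<^sub>R fact n) sums (linear_exp D x + linear_exp D y)"
    by (intro sums_add linear_exp_sums D)
  then show "linear_exp D (x + y) = linear_exp D x + linear_exp D y"
    using linear_exp_sums[OF D, of "x + y"] linear_funpow[OF D]
    by (simp add: linear_add scaleR_add_right sums_unique2)
  have "(\<lambda>n. r *\<^sub>R ((D ^^ n) x /\<^sub>R fact n)) sums (r *\<^sub>R linear_exp D x)"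
    by (intro sums_scaleR_right linear_exp_sums D)
  then show "linear_exp D (r *\<^sub>R x) = r *\<^sub>R linear_exp D x"
    using linear_exp_sums[OF D, of "r *\<^sub>R x"] linear_funpow[OF D]
    by (simp add: linear_scale mult.commute sums_unique2)
qed

lemma inner_funpow_skew:
  fixes D :: "'a::real_inner \<Rightarrow> 'a"
  assumes skew: "\<And>u v. D u \<bullet> v = - (u \<bullet> D v)"
  shows "(D ^^ i) u \<bullet> v = (-1) ^ i * (u \<bullet> (D ^^ i) v)"
proof (induction i arbitrary: v)
  case (Suc i)
  have "(D ^^ Suc i) u \<bullet> v = - ((-1) ^ i * (u \<bullet> (D ^^ i) (D v)))"
    using skew Suc by simp
  then show ?case by (simp add: funpow_Suc_right del: funpow.simps)
qed simp

text \<open>For skew-adjoint D the k-th Cauchy coefficient of the two exponential series is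
  the alternating sum of binomial coefficients times a common factor, which vanishes for k > 0.\<close>
lemma inner_linear_exp_skew:
  fixes D :: "'a::euclidean_space \<Rightarrow> 'a"
  assumes lin: "linear D" and skew: "\<And>u v. D u \<bullet> v = - (u \<bullet> D v)"
  shows "linear_exp D x \<bullet> linear_exp D x = x \<bullet> x"
proof -
  let ?a = "\<lambda>n. (D ^^ n) x /\<^sub>R fact n"
  have Cauchy_coefficient: "(\<Sum>i\<le>k. ?a i \<bullet> ?a (k - i)) = (if k = 0 then x \<bullet> x else 0)" for k
  proof -
    have "?a i \<bullet> ?a (k - i) = ((-1) ^ i * of_nat (k choose i)) * ((x \<bullet> (D ^^ k) x) / fact k)"
      if "i \<le> k" for i
    proof -
      have "(D ^^ i) x \<bullet> (D ^^ (k - i)) x = (-1) ^ i * (x \<bullet> (D ^^ i) ((D ^^ (k - i)) x))"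
        by (rule inner_funpow_skew[OF skew])
      also have "(D ^^ i) ((D ^^ (k - i)) x) = (D ^^ k) x"
        using that by (metis funpow_add comp_apply le_add_diff_inverse)
      finally show ?thesis
        using that by (simp add: binomial_fact divide_inverse)
    qed
    then have "(\<Sum>i\<le>k. ?a i \<bullet> ?a (k - i))
        = (\<Sum>i\<le>k. (-1) ^ i * of_nat (k choose i)) * ((x \<bullet> (D ^^ k) x) / fact k)"
      by (simp add: sum_distrib_right sum_divide_distrib)
    then show ?thesis
      by (cases "k = 0") (simp_all add: choose_alternating_sum)
  qed
  have "(\<lambda>k. \<Sum>i\<le>k. ?a i \<bullet> ?a (k - i)) sums (linear_exp D x \<bullet> linear_exp D x)"
    unfolding linear_exp_def
    by (intro Cauchy_product_sums_inner summable_norm_linear_exp_terms lin)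
  moreover have "(\<lambda>k. if k = 0 then x \<bullet> x else 0) sums (x \<bullet> x)"
    using sums_single[of 0 "\<lambda>_. x \<bullet> x"] by simp
  ultimately show ?thesis
    unfolding Cauchy_coefficient by (simp add: sums_unique2)
qed

lemma inj_linear_exp_skew:
  fixes D :: "'a::euclidean_space \<Rightarrow> 'a"
  assumes "linear D" and "\<And>u v. D u \<bullet> v = - (u \<bullet> D v)"
  shows "inj (linear_exp D)"
  unfolding linear_injective_0[OF linear_linear_exp[OF assms(1)]]
  using inner_linear_exp_skew[OF assms] by (metis inner_eq_zero_iff inner_zero_left)

lemma linear_exp_rotation:
  fixes D :: "'a::euclidean_space \<Rightarrow> 'a"
  assumes lin: "linear D" and Dx: "D x = a *\<^sub>R y" and Dy: "D y = - (a *\<^sub>R x)"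
  shows "linear_exp D x = cos a *\<^sub>R x + sin a *\<^sub>R y"
proof -
  have powers: "(D ^^ n) x /\<^sub>R fact n = (cos_coeff n * a ^ n) *\<^sub>R x + (sin_coeff n * a ^ n) *\<^sub>R y" for n
  proof -
    have "(D ^^ n) x = (fact n * cos_coeff n * a ^ n) *\<^sub>R x + (fact n * sin_coeff n * a ^ n) *\<^sub>R y"
    proof (induction n)
      case 0 then show ?case by (simp add: cos_coeff_def sin_coeff_def)
    next
      case (Suc n)
      have cos_step: "fact (Suc n) * cos_coeff (Suc n) * a ^ Suc n = - (fact n * sin_coeff n * a ^ n * a)"
        by (simp add: cos_coeff_Suc field_simps)
      have sin_step: "fact (Suc n) * sin_coeff (Suc n) * a ^ Suc n = fact n * cos_coeff n * a ^ n * a"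
        by (simp add: sin_coeff_Suc field_simps)
      have "(D ^^ Suc n) x
          = (fact n * cos_coeff n * a ^ n * a) *\<^sub>R y - (fact n * sin_coeff n * a ^ n * a) *\<^sub>R x"
        using Suc lin Dx Dy by (simp add: linear_add linear_scale)
      then show ?case unfolding cos_step sin_step by simp
    qed
    then show ?thesis by (simp add: scaleR_add_right field_simps)
  qed
  have "(\<lambda>n. (cos_coeff n * a ^ n) *\<^sub>R x + (sin_coeff n * a ^ n) *\<^sub>R y) sums (cos a *\<^sub>R x + sin a *\<^sub>R y)"
    by (intro sums_add sums_scaleR_left) (use cos_converges[of a] sin_converges[of a] in simp_all)
  then show ?thesis
    using linear_exp_sums[OF lin, of x] unfolding powers by (simp add: sums_unique2)
qed

section \<open>Orthonormal bases and eigenspaces of involutions\<close>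

definition orthonormal_family :: "nat \<Rightarrow> (nat \<Rightarrow> 'a::real_inner) \<Rightarrow> bool" where
  "orthonormal_family n X \<longleftrightarrow> (\<forall>i<n. \<forall>j<n. X i \<bullet> X j = (if i = j then 1 else 0))"

lemma orthonormal_basis_ofI:
  assumes W: "subspace W" and dim: "dim W = m" and in_W: "\<forall>i<m. Z i \<in> W"
    and "orthonormal_family m Z"
  shows "orthonormal_basis_of W m Z"
proof -
  have orthonormal: "\<forall>i<m. \<forall>j<m. Z i \<bullet> Z j = (if i = j then 1 else 0)"
    using assms(4) by (simp add: orthonormal_family_def)
  have "inj_on Z {..<m}"
    by (rule inj_onI) (metis lessThan_iff orthonormal zero_neq_one)
  then have card: "card (Z ` {..<m}) = m" by (simp add: card_image)
  have "pairwise orthogonal (Z ` {..<m})"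
    unfolding pairwise_def orthogonal_def using orthonormal by auto
  moreover have "0 \<notin> Z ` {..<m}" using orthonormal by force
  ultimately have "independent (Z ` {..<m})" by (rule pairwise_orthogonal_independent)
  moreover have sub: "Z ` {..<m} \<subseteq> W" using in_W by auto
  ultimately have "W \<subseteq> span (Z ` {..<m})"
    using card dim by (intro card_ge_dim_independent) auto
  moreover have "span (Z ` {..<m}) \<subseteq> W" by (rule span_minimal[OF sub W])
  ultimately show ?thesis unfolding orthonormal_basis_of_def using in_W orthonormal by auto
qed

lemma exists_orthonormal_basis_of:
  fixes W :: "'a::euclidean_space set"
  assumes W: "subspace W"
  obtains X where "orthonormal_basis_of W (dim W) X"
proof -
  obtain B where B: "B \<subseteq> W" "pairwise orthogonal B" "\<And>x. x \<in> B \<Longrightarrow> norm x = 1"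
    "independent B" "card B = dim W"
    using orthonormal_basis_subspace[OF W] by metis
  obtain X where X: "bij_betw X {..<dim W} B"
    using ex_bij_betw_nat_finite[OF independent_imp_finite[OF B(4)]] B(5)
    by (metis atLeast0LessThan)
  have "X i \<bullet> X j = (if i = j then 1 else 0)" if "i < dim W" "j < dim W" for i j
  proof (cases "i = j")
    case True
    then show ?thesis using B(3) X that by (auto simp: norm_eq_1 bij_betw_def)
  next
    case False
    then have "X i \<noteq> X j" using X that by (auto simp: bij_betw_def inj_on_def)
    then show ?thesis
      using B(2) X that False by (auto simp: pairwise_def orthogonal_def bij_betw_def)
  qed
  moreover have "X i \<in> W" if "i < dim W" for i using X B(1) that by (auto simp: bij_betw_def)
  ultimately show thesis
    by (intro that orthonormal_basis_ofI W) (auto simp: orthonormal_family_def)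
qed

lemma subspace_fix_space: "linear \<theta> \<Longrightarrow> subspace (fix_space \<theta>)"
  unfolding fix_space_def subspace_def by (auto simp: linear_add linear_scale linear_0)

lemma subspace_neg_space: "linear \<theta> \<Longrightarrow> subspace (neg_space \<theta>)"
  unfolding neg_space_def subspace_def by (auto simp: linear_add linear_scale linear_0)

lemma dim_fix_space_eq_dim_neg_space:
  fixes V :: "'a::euclidean_space set"
  assumes V: "subspace V"
    and \<theta>: "linear \<theta>" "\<And>x. \<theta> (\<theta> x) = x" "\<theta> ` V \<subseteq> V"
    and J: "linear J" "inj_on J V" "J ` V \<subseteq> V" "\<And>x. x \<in> V \<Longrightarrow> \<theta> (J x) = - J (\<theta> x)"
  shows "dim (V \<inter> fix_space \<theta>) = dim (V \<inter> neg_space \<theta>)"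
    and "dim V = 2 * dim (V \<inter> fix_space \<theta>)"
proof -
  define K where "K = V \<inter> fix_space \<theta>"
  define M where "M = V \<inter> neg_space \<theta>"
  have K: "subspace K" and M: "subspace M"
    unfolding K_def M_def by (intro subspace_inter V subspace_fix_space subspace_neg_space \<theta>)+
  have "K \<inter> M = {0}"
    using subspace_0[OF K] subspace_0[OF M]
    by (auto simp: K_def M_def fix_space_def neg_space_def eq_neg_iff_add_eq_0 simp flip: scaleR_2)
  moreover have "{x + y |x y. x \<in> K \<and> y \<in> M} = V"
  proof
    show "{x + y |x y. x \<in> K \<and> y \<in> M} \<subseteq> V"
      using V subspace_add by (auto simp: K_def M_def)
    show "V \<subseteq> {x + y |x y. x \<in> K \<and> y \<in> M}"
    proof
      fix x assume x: "x \<in> V"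
      let ?k = "(1/2) *\<^sub>R (x + \<theta> x)" and ?m = "(1/2) *\<^sub>R (x - \<theta> x)"
      have "?k \<in> V" "?m \<in> V" using x \<theta>(3) V
        by (auto intro!: subspace_scale subspace_add subspace_diff)
      moreover have "\<theta> ?k = ?k" "\<theta> ?m = - ?m"
        using \<theta>(1,2) by (auto simp: linear_add linear_diff linear_scale algebra_simps)
      moreover have "x = ?k + ?m" by (simp add: algebra_simps flip: scaleR_2)
      ultimately show "x \<in> {x + y |x y. x \<in> K \<and> y \<in> M}"
        unfolding K_def M_def fix_space_def neg_space_def by blast
    qed
  qed
  ultimately have dim_V: "dim V = dim K + dim M"
    using dim_sums_Int[OF K M] by simp
  have "J ` K \<subseteq> M" "J ` M \<subseteq> K"
    using J(1,3,4) by (auto simp: K_def M_def fix_space_def neg_space_def linear_neg)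
  moreover have "dim (J ` K) = dim K" "dim (J ` M) = dim M"
    using J(1) inj_on_subset[OF J(2)] K M
    by (auto intro!: dim_image_eq simp: span_eq_iff[THEN iffD2] K_def M_def)
  ultimately have "dim K = dim M"
    using dim_subset by (metis le_antisym)
  then show "dim K = dim M" "dim V = 2 * dim K"
    using dim_V by simp_all
qed

section \<open>Real forms of restricted root spaces\<close>

lemma scaleR_cos_sin_squared:
  fixes v :: "'a::real_vector"
  shows "(cos b * cos b) *\<^sub>R v + (sin b * sin b) *\<^sub>R v = v"
  by (simp only: scaleR_add_left[symmetric] sin_cos_squared_add3 scaleR_one)

lemma cis_phi_eps:
  assumes "cmod \<epsilon> = 1"
  shows "cis (2 * phi_eps \<epsilon>) = \<epsilon>"
proof -
  have Arg: "- (pi / 2) < Arg \<epsilon> / 2 \<and> Arg \<epsilon> / 2 \<le> pi / 2 \<and> \<epsilon> = cis (2 * (Arg \<epsilon> / 2))"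
    using mpi_less_Arg[of \<epsilon>] Arg_le_pi[of \<epsilon>] rcis_cmod_Arg[of \<epsilon>] assms
    by (simp add: rcis_def)
  have "\<phi> = Arg \<epsilon> / 2" if "- (pi / 2) < \<phi> \<and> \<phi> \<le> pi / 2 \<and> \<epsilon> = cis (2 * \<phi>)" for \<phi>
  proof -
    have "Arg \<epsilon> = 2 * \<phi>"
      using that by (intro Arg_unique'[of 1]) (auto simp: rcis_def)
    then show ?thesis by simp
  qed
  then have "phi_eps \<epsilon> = Arg \<epsilon> / 2"
    unfolding phi_eps_def using Arg by (intro the_equality) blast+
  then show ?thesis using Arg by (simp add: mult.commute)
qed

locale root_space_setting =
  fixes br :: "'g::euclidean_space \<Rightarrow> 'g \<Rightarrow> 'g"
    and \<theta>1 \<theta>2 :: "'g \<Rightarrow> 'g" and A :: "'g set" and \<epsilon> :: complex and \<alpha> :: 'g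
  assumes lie_algebra: "lie_algebra br" and ad_invariant: "ad_invariant_inner br"
    and involution1: "lie_involution br \<theta>1" and involution2: "lie_involution br \<theta>2"
    and max_abelian: "max_abelian br (neg_space \<theta>1 \<inter> neg_space \<theta>2) A"
    and unit_eps: "cmod \<epsilon> = 1"
    and root: "\<alpha> \<in> Sigma_eps br \<theta>1 \<theta>2 A \<epsilon>"
begin

lemma bilinear_br: "bilinear br"
  using lie_algebra by (simp add: lie_algebra_def)

lemmas br_simps [simp] =
  bilinear_ladd[OF bilinear_br] bilinear_radd[OF bilinear_br]
  bilinear_lmul[OF bilinear_br] bilinear_rmul[OF bilinear_br]
  bilinear_lneg[OF bilinear_br] bilinear_rneg[OF bilinear_br]
  bilinear_lsub[OF bilinear_br] bilinear_rsub[OF bilinear_br]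
  bilinear_lzero[OF bilinear_br] bilinear_rzero[OF bilinear_br]

lemma linear_br: "linear (br H)"
  using bilinear_br by (simp add: bilinear_def)

lemma br_antisym: "br x y = - br y x"
  using lie_algebra unfolding lie_algebra_def by blast

lemma br_self [simp]: "br x x = 0"
  using br_antisym[of x x] by (simp add: eq_neg_iff_add_eq_0 flip: scaleR_2)

lemma jacobi: "br x (br y z) + br y (br z x) + br z (br x y) = 0"
  using lie_algebra unfolding lie_algebra_def by blast

lemma br_derivation: "br H (br x y) = br (br H x) y + br x (br H y)"
proof -
  have "br H (br x y) = - br x (br y H) - br y (br H x)"
    using jacobi[of H x y] by (simp add: add_eq_0_iff2 add.assoc)
  then show ?thesis
    using br_antisym[of y H] br_antisym[of y "br H x"] by simp
qed

lemma br_skew: "br H u \<bullet> v = - (u \<bullet> br H v)"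
  using ad_invariant unfolding ad_invariant_inner_def by blast

lemma linear_\<theta>1: "linear \<theta>1" and linear_\<theta>2: "linear \<theta>2"
  using involution1 involution2 by (simp_all add: lie_involution_def)

lemmas involution_simps [simp] =
  linear_add[OF linear_\<theta>1] linear_scale[OF linear_\<theta>1] linear_neg[OF linear_\<theta>1]
  linear_diff[OF linear_\<theta>1] linear_0[OF linear_\<theta>1]
  linear_add[OF linear_\<theta>2] linear_scale[OF linear_\<theta>2] linear_neg[OF linear_\<theta>2]
  linear_diff[OF linear_\<theta>2] linear_0[OF linear_\<theta>2]

lemma \<theta>1_\<theta>1 [simp]: "\<theta>1 (\<theta>1 x) = x" and \<theta>2_\<theta>2 [simp]: "\<theta>2 (\<theta>2 x) = x"
  using involution1 involution2 by (simp_all add: lie_involution_def)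

lemma \<theta>1_br: "\<theta>1 (br x y) = br (\<theta>1 x) (\<theta>1 y)" and \<theta>2_br: "\<theta>2 (br x y) = br (\<theta>2 x) (\<theta>2 y)"
  using involution1 involution2 by (simp_all add: lie_involution_def)

lemma subspace_A: "subspace A"
  using max_abelian by (simp add: max_abelian_def)

lemma A_neg_spaces: "H \<in> A \<Longrightarrow> \<theta>1 H = - H \<and> \<theta>2 H = - H"
  using max_abelian unfolding max_abelian_def neg_space_def by blast

lemma A_abelian: "H \<in> A \<Longrightarrow> K \<in> A \<Longrightarrow> br H K = 0"
  using max_abelian unfolding max_abelian_def by blast

lemma mem_A_if_centralizes_A:
  assumes w: "\<theta>1 w = - w" "\<theta>2 w = - w" and centralizes: "\<And>H. H \<in> A \<Longrightarrow> br H w = 0"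
  shows "w \<in> A"
proof -
  define B where "B = span (insert w A)"
  have zero: "bilinear (\<lambda>x y. 0 :: 'g)" by (simp add: bilinear_def linear_zero)
  have "br s t = 0" if "s \<in> insert w A" "t \<in> insert w A" for s t
  proof -
    have "br w H = 0" if "H \<in> A" for H
      using centralizes[OF that] br_antisym[of w H] by simp
    then show ?thesis using that A_abelian centralizes by auto
  qed
  then have abelian: "\<forall>x\<in>B. \<forall>y\<in>B. br x y = 0"
    unfolding B_def using bilinear_eq[OF bilinear_br zero order_refl order_refl] by blast
  have "B \<subseteq> neg_space \<theta>1 \<inter> neg_space \<theta>2"
    unfolding B_def using w A_neg_spaces
    by (intro span_minimal subspace_inter subspace_neg_space linear_\<theta>1 linear_\<theta>2)
      (auto simp: neg_space_def)
  moreover have "subspace B" "A \<subseteq> B" "w \<in> B"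
    unfolding B_def by (auto intro: span_base)
  ultimately have "B = A"
    using max_abelian abelian unfolding max_abelian_def by blast
  with \<open>w \<in> B\<close> show ?thesis by simp
qed

lemma root_in_A: "\<alpha> \<in> A" and root_nonzero: "\<alpha> \<noteq> 0"
  using root by (auto simp: Sigma_eps_def)

lemma Re_Im_eps: "(Re \<epsilon>)\<^sup>2 + (Im \<epsilon>)\<^sup>2 = 1"
  using unit_eps cmod_power2[of \<epsilon>] by simp

abbreviation E where "E \<equiv> eps_root_space br \<theta>1 \<theta>2 A \<alpha> \<epsilon>"
abbreviation V where "V \<equiv> V_space br \<theta>1 \<theta>2 A \<alpha> \<epsilon>"
abbreviation m where "m \<equiv> mult br \<theta>1 \<theta>2 A \<alpha> \<epsilon>"

text \<open>J is multiplication by i on the real parts of g(\<alpha>, \<epsilon>): the element of g(\<alpha>, \<epsilon>)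
  with real part x is x - i J x.\<close>
definition J :: "'g \<Rightarrow> 'g" where
  "J x = (1 / (\<alpha> \<bullet> \<alpha>)) *\<^sub>R br \<alpha> x"

lemma linear_J: "linear J"
  unfolding J_def linear_iff by (simp add: scaleR_add_right)

lemmas J_simps [simp] =
  linear_add[OF linear_J] linear_scale[OF linear_J] linear_neg[OF linear_J]
  linear_diff[OF linear_J] linear_0[OF linear_J]

lemma mem_E_iff:
  "(u, v) \<in> E \<longleftrightarrow> (\<forall>H\<in>A. br H u = - ((\<alpha> \<bullet> H) *\<^sub>R v) \<and> br H v = (\<alpha> \<bullet> H) *\<^sub>R u) \<and>
     \<theta>1 (\<theta>2 u) = Re \<epsilon> *\<^sub>R u - Im \<epsilon> *\<^sub>R v \<and> \<theta>1 (\<theta>2 v) = Im \<epsilon> *\<^sub>R u + Re \<epsilon> *\<^sub>R v"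
  by (simp add: eps_root_space_def root_space_def)

lemma subspace_E: "subspace E"
  unfolding subspace_def
proof (intro conjI ballI allI)
  show "0 \<in> E" by (simp add: zero_prod_def mem_E_iff)
next
  fix z w :: "'g \<times> 'g" assume "z \<in> E" "w \<in> E"
  then show "z + w \<in> E"
    by (cases z, cases w) (simp add: mem_E_iff algebra_simps)
next
  fix r :: real and z :: "'g \<times> 'g" assume "z \<in> E"
  then show "r *\<^sub>R z \<in> E"
    by (cases z) (simp add: mem_E_iff scaleR_diff_right scaleR_add_right mult.commute)
qed

lemma mem_E_J:
  assumes "(u, v) \<in> E"
  shows "u = J v" and "v = - J u"
proof -
  have "br \<alpha> u = - ((\<alpha> \<bullet> \<alpha>) *\<^sub>R v)" "br \<alpha> v = (\<alpha> \<bullet> \<alpha>) *\<^sub>R u"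
    using assms root_in_A by (auto simp: mem_E_iff)
  then show "u = J v" "v = - J u"
    using root_nonzero by (simp_all add: J_def)
qed

lemma mem_E_rotate: "(u, v) \<in> E \<Longrightarrow> (- v, u) \<in> E"
  by (auto simp: mem_E_iff algebra_simps)

lemma cnj_mem_eps_root_space_iff:
  "(u, - v) \<in> eps_root_space br \<theta>1 \<theta>2 A (- \<alpha>) (inverse \<epsilon>) \<longleftrightarrow> (u, v) \<in> E"
proof -
  have Re_inverse: "Re (inverse \<epsilon>) = Re \<epsilon>" and Im_inverse: "Im (inverse \<epsilon>) = - Im \<epsilon>"
    using Re_Im_eps by (simp_all add: power2_eq_square)
  have "\<theta>1 (\<theta>2 (- v)) = Im \<epsilon> *\<^sub>R u - Re \<epsilon> *\<^sub>R v \<longleftrightarrow> \<theta>1 (\<theta>2 v) = Re \<epsilon> *\<^sub>R v - Im \<epsilon> *\<^sub>R u"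
    by (metis minus_diff_eq minus_minus linear_neg[OF linear_\<theta>1] linear_neg[OF linear_\<theta>2])
  then show ?thesis
    unfolding eps_root_space_def root_space_def mem_E_iff mem_Collect_eq prod.case
      Re_inverse Im_inverse
    by (auto simp: algebra_simps)
qed

lemma V_eq_fst_E: "V = fst ` E"
proof
  show "V \<subseteq> fst ` E"
  proof
    fix x assume "x \<in> V"
    then obtain z1 z2 where z1: "z1 \<in> E"
      and z2: "z2 \<in> eps_root_space br \<theta>1 \<theta>2 A (- \<alpha>) (inverse \<epsilon>)" and sum: "z1 + z2 = (x, 0)"
      unfolding V_space_def by blast
    obtain u1 v1 u2 v2 where z: "z1 = (u1, v1)" "z2 = (u2, v2)" by fastforce
    have "(u2, - v2) \<in> E"
      using z2 cnj_mem_eps_root_space_iff[of u2 "- v2"] unfolding z by simp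
    moreover have "- v2 = v1" "u1 + u2 = x" using sum z by (auto simp: add_eq_0_iff)
    ultimately have "u2 = u1"
      using z1 mem_E_J(1) z by metis
    then have "x = fst (2 *\<^sub>R z1)" using \<open>u1 + u2 = x\<close> z by (simp add: scaleR_2)
    moreover have "2 *\<^sub>R z1 \<in> E" using z1 subspace_E by (rule subspace_scale[rotated])
    ultimately show "x \<in> fst ` E" by blast
  qed
next
  show "fst ` E \<subseteq> V"
  proof
    fix x assume "x \<in> fst ` E"
    then obtain v where "(x, v) \<in> E" by auto
    then have half: "((1/2) *\<^sub>R x, (1/2) *\<^sub>R v) \<in> E"
      using subspace_scale[OF subspace_E, of "(x, v)" "1/2"] by simp
    have "((1/2) *\<^sub>R x, (1/2) *\<^sub>R v) + ((1/2) *\<^sub>R x, - ((1/2) *\<^sub>R v)) = (x, 0)"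
      by (simp flip: scaleR_add_left)
    then show "x \<in> V"
      unfolding V_space_def using half cnj_mem_eps_root_space_iff by blast
  qed
qed

lemma mem_V_iff: "x \<in> V \<longleftrightarrow> (x, - J x) \<in> E"
  using V_eq_fst_E mem_E_J(2) by force

lemma subspace_V: "subspace V"
  unfolding subspace_def
proof (intro conjI ballI allI)
  show "0 \<in> V" using subspace_0[OF subspace_E] by (simp add: mem_V_iff zero_prod_def)
next
  fix x y assume "x \<in> V" "y \<in> V"
  then have "(x, - J x) + (y, - J y) \<in> E" unfolding mem_V_iff by (rule subspace_add[OF subspace_E])
  moreover have "(x, - J x) + (y, - J y) = (x + y, - J (x + y))" by simp
  ultimately show "x + y \<in> V" by (simp only: mem_V_iff)
next
  fix c :: real and x assume "x \<in> V"
  then have "c *\<^sub>R (x, - J x) \<in> E" unfolding mem_V_iff by (rule subspace_scale[OF subspace_E])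
  then show "c *\<^sub>R x \<in> V" by (simp add: mem_V_iff)
qed

lemma br_V:
  assumes "x \<in> V" "H \<in> A"
  shows "br H x = (\<alpha> \<bullet> H) *\<^sub>R J x" and "br H (J x) = - ((\<alpha> \<bullet> H) *\<^sub>R x)"
proof -
  have "br H x = - ((\<alpha> \<bullet> H) *\<^sub>R (- J x))" "br H (- J x) = (\<alpha> \<bullet> H) *\<^sub>R x"
    using assms unfolding mem_V_iff mem_E_iff by blast+
  then show "br H x = (\<alpha> \<bullet> H) *\<^sub>R J x" "br H (J x) = - ((\<alpha> \<bullet> H) *\<^sub>R x)"
    by (simp_all add: minus_equation_iff)
qed

lemma \<theta>1_\<theta>2_V:
  assumes "x \<in> V"
  shows "\<theta>1 (\<theta>2 x) = Re \<epsilon> *\<^sub>R x + Im \<epsilon> *\<^sub>R J x"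
    and "\<theta>1 (\<theta>2 (J x)) = - (Im \<epsilon> *\<^sub>R x) + Re \<epsilon> *\<^sub>R J x"
proof -
  have "\<theta>1 (\<theta>2 x) = Re \<epsilon> *\<^sub>R x - Im \<epsilon> *\<^sub>R (- J x)"
    "\<theta>1 (\<theta>2 (- J x)) = Im \<epsilon> *\<^sub>R x + Re \<epsilon> *\<^sub>R (- J x)"
    using assms unfolding mem_V_iff mem_E_iff by blast+
  then show "\<theta>1 (\<theta>2 x) = Re \<epsilon> *\<^sub>R x + Im \<epsilon> *\<^sub>R J x"
    "\<theta>1 (\<theta>2 (J x)) = - (Im \<epsilon> *\<^sub>R x) + Re \<epsilon> *\<^sub>R J x"
    by (simp_all add: minus_equation_iff[of "\<theta>1 (\<theta>2 (J x))"] algebra_simps)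
qed

lemma J_in_V:
  assumes "x \<in> V"
  shows "J x \<in> V"
proof -
  have "(J x, x) \<in> E" using assms mem_E_rotate[of x "- J x"] by (simp add: mem_V_iff)
  then show ?thesis unfolding V_eq_fst_E by (rule rev_image_eqI) simp
qed

lemma J_J: "x \<in> V \<Longrightarrow> J (J x) = - x"
  using br_V(2)[OF _ root_in_A] root_nonzero by (simp add: J_def)

lemma inj_on_J: "inj_on J V"
proof (rule inj_onI)
  fix x y assume "x \<in> V" "y \<in> V" "J x = J y"
  then have "- x = - y" using J_J by metis
  then show "x = y" by simp
qed

lemma \<theta>2_\<theta>1_V:
  assumes x: "x \<in> V"
  shows "\<theta>2 (\<theta>1 x) = Re \<epsilon> *\<^sub>R x - Im \<epsilon> *\<^sub>R J x"
    and "\<theta>2 (\<theta>1 (J x)) = Im \<epsilon> *\<^sub>R x + Re \<epsilon> *\<^sub>R J x"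
proof -
  have "\<theta>1 (\<theta>2 (Re \<epsilon> *\<^sub>R x - Im \<epsilon> *\<^sub>R J x)) = ((Re \<epsilon>)\<^sup>2 + (Im \<epsilon>)\<^sup>2) *\<^sub>R x"
    by (simp add: \<theta>1_\<theta>2_V[OF x] algebra_simps power2_eq_square)
  then show "\<theta>2 (\<theta>1 x) = Re \<epsilon> *\<^sub>R x - Im \<epsilon> *\<^sub>R J x"
    by (metis Re_Im_eps \<theta>1_\<theta>1 \<theta>2_\<theta>2 scaleR_one)
  have "\<theta>1 (\<theta>2 (Im \<epsilon> *\<^sub>R x + Re \<epsilon> *\<^sub>R J x)) = ((Re \<epsilon>)\<^sup>2 + (Im \<epsilon>)\<^sup>2) *\<^sub>R J x"
    by (simp add: \<theta>1_\<theta>2_V[OF x] algebra_simps power2_eq_square)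
  then show "\<theta>2 (\<theta>1 (J x)) = Im \<epsilon> *\<^sub>R x + Re \<epsilon> *\<^sub>R J x"
    by (metis Re_Im_eps \<theta>1_\<theta>1 \<theta>2_\<theta>2 scaleR_one)
qed

text \<open>Both \<theta>1 and \<theta>2 act as -1 on A and conjugate \<theta>1 \<theta>2 into its inverse, so they
  map g(\<alpha>, \<epsilon>) to its complex conjugate; on real parts this means the following.\<close>
lemma involution_V:
  assumes \<theta>: "\<theta> \<in> {\<theta>1, \<theta>2}" and x: "x \<in> V"
  shows "\<theta> x \<in> V" and "\<theta> (J x) = - J (\<theta> x)"
proof -
  have lin: "linear \<theta>" using \<theta> linear_\<theta>1 linear_\<theta>2 by auto
  have br_\<theta>: "br H (\<theta> u) = - \<theta> (br H u)" if "H \<in> A" for H u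
    using \<theta> \<theta>1_br \<theta>2_br A_neg_spaces[OF that] by auto
  have reverses: "\<theta>1 (\<theta>2 (\<theta> z)) = \<theta> (\<theta>2 (\<theta>1 z))" for z
    using \<theta> by auto
  show J_\<theta>: "\<theta> (J x) = - J (\<theta> x)"
    unfolding J_def using br_\<theta>[OF root_in_A] lin by (simp add: linear_scale)
  have "(\<theta> x, \<theta> (J x)) \<in> E"
    unfolding mem_E_iff reverses \<theta>2_\<theta>1_V[OF x]
    using br_\<theta> br_V[OF x] lin by (simp add: linear_add linear_diff linear_scale linear_neg)
  then show "\<theta> x \<in> V"
    unfolding J_\<theta> mem_V_iff .
qed

lemma dim_V_eq_dim_E: "dim V = dim E"
proof -
  have "inj_on fst (span E)"
    unfolding span_eq_iff[THEN iffD2, OF subspace_E]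
    by (rule inj_onI) (metis mem_E_J(2) prod.collapse)
  then show ?thesis
    unfolding V_eq_fst_E by (rule dim_image_eq[OF linear_fst])
qed

lemma dim_V_inter_fix_space: "\<theta> \<in> {\<theta>1, \<theta>2} \<Longrightarrow> dim (V \<inter> fix_space \<theta>) = m"
  and dim_V_inter_neg_space: "\<theta> \<in> {\<theta>1, \<theta>2} \<Longrightarrow> dim (V \<inter> neg_space \<theta>) = m"
proof -
  assume \<theta>: "\<theta> \<in> {\<theta>1, \<theta>2}"
  then have "linear \<theta>" "\<And>x. \<theta> (\<theta> x) = x" using linear_\<theta>1 linear_\<theta>2 by auto
  note eigenspaces = dim_fix_space_eq_dim_neg_space[OF subspace_V this _ linear_J inj_on_J]
  have "dim (V \<inter> fix_space \<theta>) = dim (V \<inter> neg_space \<theta>)" "dim V = 2 * dim (V \<inter> fix_space \<theta>)"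
    using involution_V[OF \<theta>] J_in_V by (auto intro!: eigenspaces)
  then show "dim (V \<inter> fix_space \<theta>) = m" "dim (V \<inter> neg_space \<theta>) = m"
    by (simp_all add: mult_def flip: dim_V_eq_dim_E)
qed

lemma inner_J_J:
  assumes "y \<in> V"
  shows "J x \<bullet> J y = x \<bullet> y"
proof -
  have "J x \<bullet> J y = - (x \<bullet> br \<alpha> (J y)) / (\<alpha> \<bullet> \<alpha>)"
    using br_skew[of \<alpha> x "J y"] by (simp add: J_def)
  also have "br \<alpha> (J y) = - ((\<alpha> \<bullet> \<alpha>) *\<^sub>R y)" by (rule br_V(2)[OF assms root_in_A])
  finally show ?thesis using root_nonzero by simp
qed

lemma inner_J_right: "x \<bullet> J y = - (J x \<bullet> y)"
  using br_skew[of \<alpha> x y] by (simp add: J_def)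

lemma \<theta>_on_V_inter_fix_space1:
  assumes x: "x \<in> V" and fix1: "\<theta>1 x = x"
  shows "\<theta>1 (J x) = - J x"
    and "\<theta>2 x = Re \<epsilon> *\<^sub>R x - Im \<epsilon> *\<^sub>R J x"
    and "\<theta>2 (J x) = - (Im \<epsilon> *\<^sub>R x) - Re \<epsilon> *\<^sub>R J x"
proof -
  show J: "\<theta>1 (J x) = - J x" using involution_V(2)[of \<theta>1 x] x fix1 by simp
  show "\<theta>2 x = Re \<epsilon> *\<^sub>R x - Im \<epsilon> *\<^sub>R J x" using \<theta>2_\<theta>1_V(1)[OF x] fix1 by simp
  have "- \<theta>2 (J x) = Im \<epsilon> *\<^sub>R x + Re \<epsilon> *\<^sub>R J x" using \<theta>2_\<theta>1_V(2)[OF x] J by simp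
  then show "\<theta>2 (J x) = - (Im \<epsilon> *\<^sub>R x) - Re \<epsilon> *\<^sub>R J x"
    by (simp add: minus_equation_iff[of "\<theta>2 (J x)"])
qed

lemma br_J_V_inter_fix_space1:
  assumes x: "x \<in> V" and fix1: "\<theta>1 x = x"
  shows "br x (J x) = (x \<bullet> x) *\<^sub>R \<alpha>"
proof -
  define w where "w = br x (J x)"
  note \<theta>_x = \<theta>_on_V_inter_fix_space1[OF x fix1]
  have "\<theta>1 w = - w" unfolding w_def \<theta>1_br fix1 \<theta>_x(1) by simp
  moreover have "\<theta>2 w = - ((Re \<epsilon>)\<^sup>2 + (Im \<epsilon>)\<^sup>2) *\<^sub>R w"
    unfolding w_def \<theta>2_br \<theta>_x(2,3)
    by (simp add: br_antisym[of "J x" x] algebra_simps power2_eq_square)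
  moreover have "br H w = 0" if "H \<in> A" for H
    unfolding w_def br_derivation br_V[OF x that] by simp
  ultimately have w_in_A: "w \<in> A"
    using Re_Im_eps by (intro mem_A_if_centralizes_A) auto
  have "w \<bullet> H = (x \<bullet> x) * (\<alpha> \<bullet> H)" if "H \<in> A" for H
  proof -
    have "w \<bullet> H = - (J x \<bullet> br x H)" unfolding w_def by (rule br_skew)
    also have "br x H = - ((\<alpha> \<bullet> H) *\<^sub>R J x)" using br_antisym[of x H] br_V(1)[OF x that] by simp
    finally show ?thesis using inner_J_J[OF x, of x] by simp
  qed
  then have "(w - (x \<bullet> x) *\<^sub>R \<alpha>) \<bullet> H = 0" if "H \<in> A" for H
    using that by (simp add: inner_diff_left)
  moreover have "w - (x \<bullet> x) *\<^sub>R \<alpha> \<in> A"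
    using w_in_A root_in_A subspace_A by (intro subspace_diff subspace_scale) auto
  ultimately show ?thesis unfolding w_def by (metis inner_eq_zero_iff eq_iff_diff_eq_0)
qed

lemma Ad_exp_V:
  assumes x: "x \<in> V" and H: "H \<in> A"
  shows "Ad_exp br H x = cos (\<alpha> \<bullet> H) *\<^sub>R x + sin (\<alpha> \<bullet> H) *\<^sub>R J x"
    and "Ad_exp br H (J x) = - (sin (\<alpha> \<bullet> H) *\<^sub>R x) + cos (\<alpha> \<bullet> H) *\<^sub>R J x"
proof -
  show "Ad_exp br H x = cos (\<alpha> \<bullet> H) *\<^sub>R x + sin (\<alpha> \<bullet> H) *\<^sub>R J x"
    unfolding Ad_exp_eq_linear_exp by (rule linear_exp_rotation[OF linear_br br_V[OF x H]])
  have "br H (J x) = (\<alpha> \<bullet> H) *\<^sub>R (- x)" "br H (- x) = - ((\<alpha> \<bullet> H) *\<^sub>R J x)"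
    using br_V[OF x H] by simp_all
  then have "linear_exp (br H) (J x) = cos (\<alpha> \<bullet> H) *\<^sub>R J x + sin (\<alpha> \<bullet> H) *\<^sub>R (- x)"
    by (rule linear_exp_rotation[OF linear_br])
  then show "Ad_exp br H (J x) = - (sin (\<alpha> \<bullet> H) *\<^sub>R x) + cos (\<alpha> \<bullet> H) *\<^sub>R J x"
    unfolding Ad_exp_eq_linear_exp by simp
qed

lemma inj_Ad_exp: "inj (Ad_exp br H)"
  unfolding Ad_exp_eq_linear_exp using linear_br br_skew by (rule inj_linear_exp_skew)

lemma bracket_identities_J:
  assumes "\<forall>i<n. X i \<in> V \<and> Y i = J (X i) \<and> br (X i) (Y i) = \<alpha>"
  shows "bracket_identities br A \<alpha> n X Y"
  unfolding bracket_identities_def using assms br_V Ad_exp_V by auto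

lemma adapted_bases:
  assumes \<theta>: "\<theta> \<in> {\<theta>1, \<theta>2}"
    and family: "\<forall>i<m. X i \<in> V \<inter> fix_space \<theta> \<and> Y i = J (X i) \<and> br (X i) (Y i) = \<alpha>"
    and orthonormal: "orthonormal_family m X"
  shows "orthonormal_basis_of (V \<inter> fix_space \<theta>) m X"
    and "orthonormal_basis_of (V \<inter> neg_space \<theta>) m Y"
    and "bracket_identities br A \<alpha> m X Y"
proof -
  have lin: "linear \<theta>" using \<theta> linear_\<theta>1 linear_\<theta>2 by auto
  show "orthonormal_basis_of (V \<inter> fix_space \<theta>) m X"
    using family orthonormal dim_V_inter_fix_space[OF \<theta>]
    by (intro orthonormal_basis_ofI subspace_inter subspace_V subspace_fix_space lin) auto
  have "Y i \<in> V \<inter> neg_space \<theta>" if "i < m" for i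
    using family that J_in_V involution_V(2)[OF \<theta>] by (auto simp: fix_space_def neg_space_def)
  moreover have "orthonormal_family m Y"
    using orthonormal family inner_J_J by (simp add: orthonormal_family_def)
  ultimately show "orthonormal_basis_of (V \<inter> neg_space \<theta>) m Y"
    using dim_V_inter_neg_space[OF \<theta>]
    by (intro orthonormal_basis_ofI subspace_inter subspace_V subspace_neg_space lin) auto
  show "bracket_identities br A \<alpha> m X Y"
    using family by (intro bracket_identities_J) auto
qed

lemma exists_adapted_family:
  obtains X where "\<forall>i<m. X i \<in> V \<inter> fix_space \<theta>1 \<and> br (X i) (J (X i)) = \<alpha>"
    and "orthonormal_family m X"
proof -
  obtain X where X: "orthonormal_basis_of (V \<inter> fix_space \<theta>1) m X"
    using exists_orthonormal_basis_of[OF subspace_inter[OF subspace_V subspace_fix_space[OF linear_\<theta>1]]]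
      dim_V_inter_fix_space[of \<theta>1] by auto
  then have "orthonormal_family m X" and in_K: "\<forall>i<m. X i \<in> V \<inter> fix_space \<theta>1"
    by (auto simp: orthonormal_basis_of_def orthonormal_family_def)
  moreover have "br (X i) (J (X i)) = \<alpha>" if "i < m" for i
    using br_J_V_inter_fix_space1[of "X i"] in_K \<open>orthonormal_family m X\<close> that
    by (simp add: fix_space_def orthonormal_family_def)
  ultimately show thesis using that by blast
qed

definition twist :: "real \<Rightarrow> 'g \<Rightarrow> 'g" where
  "twist b x = cos b *\<^sub>R x - sin b *\<^sub>R J x"

lemma twist_in_V: "x \<in> V \<Longrightarrow> twist b x \<in> V"
  unfolding twist_def using J_in_V subspace_V by (intro subspace_diff subspace_scale) auto

lemma J_twist: "x \<in> V \<Longrightarrow> J (twist b x) = cos b *\<^sub>R J x + sin b *\<^sub>R x"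
  unfolding twist_def using J_J by simp

lemma Ad_exp_twist:
  assumes x: "x \<in> V" and H: "H \<in> A"
  shows "Ad_exp br H (twist (\<alpha> \<bullet> H) x) = x"
    and "Ad_exp br H (J (twist (\<alpha> \<bullet> H) x)) = J x"
proof -
  let ?b = "\<alpha> \<bullet> H"
  have "Ad_exp br H (twist ?b x) = cos ?b *\<^sub>R twist ?b x + sin ?b *\<^sub>R J (twist ?b x)"
    by (rule Ad_exp_V(1)[OF twist_in_V[OF x] H])
  also have "\<dots> = (cos ?b * cos ?b) *\<^sub>R x + (sin ?b * sin ?b) *\<^sub>R x"
    unfolding J_twist[OF x] by (simp add: twist_def algebra_simps)
  finally show "Ad_exp br H (twist ?b x) = x" by (simp only: scaleR_cos_sin_squared)
  have "Ad_exp br H (J (twist ?b x)) = - (sin ?b *\<^sub>R twist ?b x) + cos ?b *\<^sub>R J (twist ?b x)"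
    by (rule Ad_exp_V(2)[OF twist_in_V[OF x] H])
  also have "\<dots> = (cos ?b * cos ?b) *\<^sub>R J x + (sin ?b * sin ?b) *\<^sub>R J x"
    unfolding J_twist[OF x] by (simp add: twist_def algebra_simps)
  finally show "Ad_exp br H (J (twist ?b x)) = J x" by (simp only: scaleR_cos_sin_squared)
qed

lemma inner_twist:
  assumes "x \<in> V" "y \<in> V"
  shows "twist b x \<bullet> twist b y = x \<bullet> y"
proof -
  have "twist b x \<bullet> twist b y = (cos b * cos b) * (x \<bullet> y) + (sin b * sin b) * (x \<bullet> y)"
    unfolding twist_def
    by (simp add: inner_diff_left inner_diff_right inner_J_J[OF assms(2)] inner_J_right
        J_J[OF assms(1)] algebra_simps)
  then show ?thesis by (simp flip: distrib_right)
qed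

lemma br_twist:
  assumes "x \<in> V"
  shows "br (twist b x) (J (twist b x)) = br x (J x)"
proof -
  have "br (twist b x) (J (twist b x)) = (cos b * cos b) *\<^sub>R br x (J x) + (sin b * sin b) *\<^sub>R br x (J x)"
    unfolding J_twist[OF assms] twist_def
    by (simp add: br_antisym[of "J x" x] J_J[OF assms] algebra_simps)
  then show ?thesis by (simp only: scaleR_cos_sin_squared)
qed

text \<open>On the plane spanned by x and J x, \<theta>1 is the reflection in the line of x and \<theta>2 the
  reflection in the line at angle -phi_eps \<epsilon>, so twisting by phi_eps \<epsilon> carries the fixed
  line of \<theta>1 to that of \<theta>2.\<close>
lemma \<theta>2_twist:
  assumes x: "x \<in> V" and fix1: "\<theta>1 x = x"
  shows "\<theta>2 (twist (phi_eps \<epsilon>) x) = twist (phi_eps \<epsilon>) x"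
proof -
  let ?b = "phi_eps \<epsilon>"
  have Re: "Re \<epsilon> = cos (2 * ?b)" and Im: "Im \<epsilon> = sin (2 * ?b)"
    using arg_cong[OF cis_phi_eps[OF unit_eps], of Re] arg_cong[OF cis_phi_eps[OF unit_eps], of Im]
    by simp_all
  have "cos ?b * Re \<epsilon> + sin ?b * Im \<epsilon> = cos ?b"
    using cos_diff[of "2 * ?b" ?b] by (simp add: Re Im mult.commute)
  moreover have "sin ?b * Re \<epsilon> - cos ?b * Im \<epsilon> = - sin ?b"
    using sin_diff[of ?b "2 * ?b"] by (simp add: Re Im mult.commute)
  moreover have "\<theta>2 (twist ?b x)
      = (cos ?b * Re \<epsilon> + sin ?b * Im \<epsilon>) *\<^sub>R x + (sin ?b * Re \<epsilon> - cos ?b * Im \<epsilon>) *\<^sub>R J x"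
    unfolding twist_def by (simp add: \<theta>_on_V_inter_fix_space1[OF x fix1] algebra_simps)
  ultimately show ?thesis by (simp add: twist_def)
qed

lemma twisted_family:
  assumes family: "\<forall>i<m. X i \<in> V \<inter> fix_space \<theta>1 \<and> br (X i) (J (X i)) = \<alpha>"
    and orthonormal: "orthonormal_family m X"
    and H: "H \<in> A" "\<alpha> \<bullet> H = phi_eps \<epsilon>"
  shows "\<forall>i<m. inv (Ad_exp br H) (X i) \<in> V \<inter> fix_space \<theta>2 \<and>
      inv (Ad_exp br H) (J (X i)) = J (inv (Ad_exp br H) (X i)) \<and>
      br (inv (Ad_exp br H) (X i)) (inv (Ad_exp br H) (J (X i))) = \<alpha>"
    and "orthonormal_family m (\<lambda>i. inv (Ad_exp br H) (X i))"
proof -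
  have X: "X i \<in> V" "\<theta>1 (X i) = X i" if "i < m" for i
    using family that by (auto simp: fix_space_def)
  have inv_X: "inv (Ad_exp br H) (X i) = twist (phi_eps \<epsilon>) (X i)"
    and inv_J_X: "inv (Ad_exp br H) (J (X i)) = J (twist (phi_eps \<epsilon>) (X i))" if "i < m" for i
    using inv_f_f[OF inj_Ad_exp] Ad_exp_twist[OF X(1)[OF that] H(1)] H(2) by metis+
  show "\<forall>i<m. inv (Ad_exp br H) (X i) \<in> V \<inter> fix_space \<theta>2 \<and>
      inv (Ad_exp br H) (J (X i)) = J (inv (Ad_exp br H) (X i)) \<and>
      br (inv (Ad_exp br H) (X i)) (inv (Ad_exp br H) (J (X i))) = \<alpha>"
    using family X twist_in_V \<theta>2_twist br_twist by (simp add: inv_X inv_J_X fix_space_def)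
  show "orthonormal_family m (\<lambda>i. inv (Ad_exp br H) (X i))"
    using orthonormal X inner_twist by (simp add: inv_X orthonormal_family_def)
qed

end

theorem lemma2p3:
  fixes br :: "'g::euclidean_space \<Rightarrow> 'g \<Rightarrow> 'g"
    and \<theta>1 \<theta>2 :: "'g \<Rightarrow> 'g" and l :: nat and A P :: "'g set"
    and \<epsilon> :: complex and \<alpha> :: 'g
  assumes "lie_algebra br" and "semisimple br" and "ad_invariant_inner br"
    and "lie_involution br \<theta>1" and "lie_involution br \<theta>2"
    and "l > 0" and "(\<theta>1 \<circ> \<theta>2) ^^ l = id"
    and "max_abelian br (neg_space \<theta>1 \<inter> neg_space \<theta>2) A"
    and "positive_system br A P"
    and "cmod \<epsilon> = 1"
    and "\<alpha> \<in> Sigma_eps br \<theta>1 \<theta>2 A \<epsilon> \<inter> P"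
  shows "\<exists>X Y.
    orthonormal_basis_of (V_space br \<theta>1 \<theta>2 A \<alpha> \<epsilon> \<inter> fix_space \<theta>1) (mult br \<theta>1 \<theta>2 A \<alpha> \<epsilon>) X \<and>
    orthonormal_basis_of (V_space br \<theta>1 \<theta>2 A \<alpha> \<epsilon> \<inter> neg_space \<theta>1) (mult br \<theta>1 \<theta>2 A \<alpha> \<epsilon>) Y \<and>
    bracket_identities br A \<alpha> (mult br \<theta>1 \<theta>2 A \<alpha> \<epsilon>) X Y \<and>
    (\<forall>H\<epsilon>\<in>A. \<alpha> \<bullet> H\<epsilon> = phi_eps \<epsilon> \<longrightarrow>
       orthonormal_basis_of (V_space br \<theta>1 \<theta>2 A \<alpha> \<epsilon> \<inter> fix_space \<theta>2) (mult br \<theta>1 \<theta>2 A \<alpha> \<epsilon>)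
         (\<lambda>i. inv (Ad_exp br H\<epsilon>) (X i)) \<and>
       orthonormal_basis_of (V_space br \<theta>1 \<theta>2 A \<alpha> \<epsilon> \<inter> neg_space \<theta>2) (mult br \<theta>1 \<theta>2 A \<alpha> \<epsilon>)
         (\<lambda>i. inv (Ad_exp br H\<epsilon>) (Y i)) \<and>
       bracket_identities br A \<alpha> (mult br \<theta>1 \<theta>2 A \<alpha> \<epsilon>)
         (\<lambda>i. inv (Ad_exp br H\<epsilon>) (X i)) (\<lambda>i. inv (Ad_exp br H\<epsilon>) (Y i)))"
proof -
  interpret root_space_setting br \<theta>1 \<theta>2 A \<epsilon> \<alpha>
    using assms by unfold_locales auto
  obtain X where family: "\<forall>i<m. X i \<in> V \<inter> fix_space \<theta>1 \<and> br (X i) (J (X i)) = \<alpha>"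
    and orthonormal: "orthonormal_family m X"
    by (rule exists_adapted_family)
  let ?Y = "\<lambda>i. J (X i)"
  have "orthonormal_basis_of (V \<inter> fix_space \<theta>1) m X \<and>
      orthonormal_basis_of (V \<inter> neg_space \<theta>1) m ?Y \<and> bracket_identities br A \<alpha> m X ?Y"
    using adapted_bases[of \<theta>1 X ?Y] family orthonormal by simp
  moreover have "orthonormal_basis_of (V \<inter> fix_space \<theta>2) m (\<lambda>i. inv (Ad_exp br H) (X i)) \<and>
      orthonormal_basis_of (V \<inter> neg_space \<theta>2) m (\<lambda>i. inv (Ad_exp br H) (?Y i)) \<and>
      bracket_identities br A \<alpha> m (\<lambda>i. inv (Ad_exp br H) (X i)) (\<lambda>i. inv (Ad_exp br H) (?Y i))"
    if "H \<in> A" "\<alpha> \<bullet> H = phi_eps \<epsilon>" for H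
    using adapted_bases[OF _ twisted_family[OF family orthonormal that]] by simp
  ultimately show ?thesis by blast
qed

end
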